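(* For every non-negative integer $n$, the number of partitions into an even number of distinct parts $\lambda_1>\lambda_2>\dots>\lambda_{2l}$ with $\lambda_1+\lambda_3+\dots+\lambda_{2l-1}=n$ equals the number of partitions of $n$ with non-negative crank. Equivalently, \[\sum_{\pi\in\mathcal{D}_e}q^{\mathcal{O}(\pi)}=\sum_{\pi\in\tilde C_{\ge0}}q^{|\pi|},\] where $\mathcal{D}_e$ is the set of partitions into an even number of distinct parts, $\mathcal{O}(\pi)$ is the sum of the odd-indexed parts of $\pi$, and $\tilde C_{\ge 0}$ is the set of partitions with crank $\ge 0$.
   Context: A partition is a finite weakly decreasing sequence of positive integers $(\lambda_1,\lambda_2,\dots)$; the empty partition has $0$ parts (an even number) and norm $0$. The crank of a partition $\pi$ is defined as: the largest part of $\pi$ if $1$ is not a part of $\pi$ (the empty partition has crank $0$); otherwise, (the number of parts of $\pi$ larger than the number of $1$'s in $\pi$) minus (the number of $1$'s in $\pi$). *)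

theory Defs
  imports Main
begin

definition is_partition :: "nat list \<Rightarrow> bool" where
  "is_partition xs \<longleftrightarrow> sorted_wrt (\<ge>) xs \<and> (\<forall>x\<in>set xs. 0 < x)"

definition is_distinct_partition :: "nat list \<Rightarrow> bool" where
  "is_distinct_partition xs \<longleftrightarrow> sorted_wrt (>) xs \<and> (\<forall>x\<in>set xs. 0 < x)"

(* sum of the odd-indexed parts lambda_1 + lambda_3 + ... (1-based indexing) *)
definition odd_part_sum :: "nat list \<Rightarrow> nat" where
  "odd_part_sum xs = (\<Sum>i\<in>{i. i < length xs \<and> even i}. xs ! i)"

definition crank :: "nat list \<Rightarrow> int" where
  "crank xs = (let w = count_list xs 1 in
     if w = 0 then (if xs = [] then 0 else int (Max (set xs)))
     else int (length (filter (\<lambda>x. x > w) xs)) - int w)"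

end

theory Submission
  imports Defs "HOL-Library.Multiset"
begin

(* Both sides are in bijection with pairs (a, y), where a_1 > ... > a_l > 0 and y is an arbitrary
   vector in N^l, counted with weight |a| + l(l+1)/2 + sum_j j y_j.

   A partition into 2l distinct parts is uniquely of the form lambda_(2i-1) = a_i + b_i + 1,
   lambda_(2i) = a_i + b_(i+1) + 1 with b_1 > ... > b_l >= 0 (and b_(l+1) = -1); its odd-part sum
   is |a| + |b| + l, and y is the vector of gaps of b.

   For a partition p with crank >= 0, let l be the number of parts with p_j > j. These parts are
   at least l + 1 and give p_j = a_j + j; the other parts lie in {1, ..., l + 1}, and crank >= 0
   says precisely that at most l of them equal 1. So the multiplicities m_k of the small parts are
   recorded without loss by y_1 = m_1 + (l + 1) m_(l+1) and y_k = m_k for 2 <= k <= l. *)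

lemma odd_part_sum_Nil [simp]: "odd_part_sum [] = 0"
  by (simp add: odd_part_sum_def)

lemma odd_part_sum_Cons_Cons [simp]: "odd_part_sum (x # y # zs) = x + odd_part_sum zs"
proof -
  have "{i. i < length (x # y # zs) \<and> even i} = insert 0 (Suc ` Suc ` {i. i < length zs \<and> even i})"
    (is "?A = ?B")
  proof (rule set_eqI)
    fix i
    show "i \<in> ?A \<longleftrightarrow> i \<in> ?B"
      by (cases i; cases "i - 1") auto
  qed
  then show ?thesis
    unfolding odd_part_sum_def by (simp add: sum.reindex)
qed

lemma strict_desc_Cons_iff:
  "sorted_wrt (>) ((x::nat) # xs) \<longleftrightarrow> (xs = [] \<or> hd xs < x) \<and> sorted_wrt (>) xs"
  by (cases xs) (auto simp: sorted_wrt2)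

(* In merge_pairs, hd_succ bs stands for b_(i+1) + 1; hd_succ [] = 0 realises b_(l+1) = -1. *)
fun hd_succ :: "nat list \<Rightarrow> nat" where
  "hd_succ [] = 0"
| "hd_succ (b # _) = Suc b"

lemma hd_succ_le: "sorted_wrt (>) (b # bs) \<Longrightarrow> hd_succ bs \<le> b"
  by (cases bs) auto

fun merge_pairs :: "nat list \<Rightarrow> nat list \<Rightarrow> nat list" where
  "merge_pairs (a # as) (b # bs) = (a + b + 1) # (a + hd_succ bs) # merge_pairs as bs"
| "merge_pairs _ _ = []"

fun split_pairs :: "nat list \<Rightarrow> nat list \<times> nat list" where
  "split_pairs (p # r # rest) =
     (case split_pairs rest of (as, bs) \<Rightarrow> ((r - hd_succ bs) # as, (p - (r - hd_succ bs) - 1) # bs))"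
| "split_pairs _ = ([], [])"

lemma length_merge_pairs:
  "length as = length bs \<Longrightarrow> length (merge_pairs as bs) = 2 * length as"
  by (induction as bs rule: list_induct2) auto

lemma odd_part_sum_merge_pairs:
  "length as = length bs \<Longrightarrow> odd_part_sum (merge_pairs as bs) = length as + sum_list as + sum_list bs"
  by (induction as bs rule: list_induct2) auto

lemma split_merge_pairs: "length as = length bs \<Longrightarrow> split_pairs (merge_pairs as bs) = (as, bs)"
  by (induction as bs rule: list_induct2) auto

lemma merge_pairs_distinct_partition:
  assumes "length as = length bs" "is_distinct_partition as" "sorted_wrt (>) bs"
  shows "is_distinct_partition (merge_pairs as bs)"
  using assms
proof (induction as bs rule: list_induct2)
  case Nil
  then show ?case by (simp add: is_distinct_partition_def)
next
  case (Cons a as b bs)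
  have IH: "is_distinct_partition (merge_pairs as bs)"
    using Cons by (simp add: is_distinct_partition_def)
  have "merge_pairs as bs = [] \<or> hd (merge_pairs as bs) < a + hd_succ bs"
    using Cons.hyps Cons.prems(1)
    by (cases as; cases bs) (auto simp: is_distinct_partition_def)
  moreover have "hd_succ bs \<le> b" "0 < a"
    using hd_succ_le Cons.prems by (auto simp: is_distinct_partition_def)
  ultimately show ?case
    using IH Cons.hyps
    by (auto simp: is_distinct_partition_def strict_desc_Cons_iff simp del: sorted_wrt.simps(2))
qed

lemma hd_merge_pairs:
  "length as = length bs \<Longrightarrow> as \<noteq> [] \<Longrightarrow> hd (merge_pairs as bs) = hd as + hd_succ bs"
  by (cases as; cases bs) auto

lemma merge_split_pairs:
  assumes "is_distinct_partition l" "even (length l)" "split_pairs l = (as, bs)"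
  shows "merge_pairs as bs = l \<and> length as = length bs \<and> is_distinct_partition as
    \<and> sorted_wrt (>) bs"
  using assms
proof (induction l arbitrary: as bs rule: split_pairs.induct)
  case (1 p r rest)
  obtain as' bs' where split: "split_pairs rest = (as', bs')"
    by (cases "split_pairs rest")
  have IH: "merge_pairs as' bs' = rest" "length as' = length bs'" "is_distinct_partition as'"
    "sorted_wrt (>) bs'"
    using "1.IH"[OF _ _ split] "1.prems"(1,2) by (simp_all add: is_distinct_partition_def)
  define a where "a = r - hd_succ bs'"
  have "r < p" "0 < r"
    using "1.prems" by (auto simp: is_distinct_partition_def)
  moreover have "rest = [] \<or> hd rest < r"
    using "1.prems" by (cases rest) (auto simp: is_distinct_partition_def)
  moreover have "as' = [] \<or> hd as' + hd_succ bs' = hd rest"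
    using IH hd_merge_pairs by force
  moreover have "as' = [] \<longleftrightarrow> bs' = []" "as' = [] \<longleftrightarrow> rest = []"
    using IH by (cases as'; cases bs'; auto)+
  moreover have "bs' = [] \<or> hd_succ bs' = Suc (hd bs')"
    by (cases bs') auto
  ultimately have bounds: "hd_succ bs' < r" "as' = [] \<or> hd as' < a" "bs' = [] \<or> hd bs' < p - a - 1"
    unfolding a_def by auto
  have "as = a # as'" "bs = (p - a - 1) # bs'"
    using "1.prems"(3) split by (simp_all add: a_def)
  moreover have "is_distinct_partition (a # as')"
    using IH(3) bounds by (auto simp: is_distinct_partition_def strict_desc_Cons_iff a_def
        simp del: sorted_wrt.simps(2))
  moreover have "sorted_wrt (>) ((p - a - 1) # bs')"
    using IH(4) bounds by (auto simp: strict_desc_Cons_iff simp del: sorted_wrt.simps(2))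
  moreover have "merge_pairs (a # as') ((p - a - 1) # bs') = p # r # rest"
    using IH(1) bounds \<open>r < p\<close> by (auto simp: a_def)
  ultimately show ?case
    using IH(2) by simp
qed (auto simp: is_distinct_partition_def)

definition pair_partitions :: "nat \<Rightarrow> (nat list \<times> nat list) set" where
  "pair_partitions n = {(as, bs). is_distinct_partition as \<and> sorted_wrt (>) bs
     \<and> length bs = length as \<and> length as + sum_list as + sum_list bs = n}"

lemma bij_betw_merge_pairs:
  "bij_betw (\<lambda>(as, bs). merge_pairs as bs) (pair_partitions n)
     {xs. is_distinct_partition xs \<and> even (length xs) \<and> odd_part_sum xs = n}"
proof (rule bij_betw_byWitness[where f' = split_pairs])
  show "\<forall>x\<in>pair_partitions n. split_pairs (case x of (as, bs) \<Rightarrow> merge_pairs as bs) = x"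
    by (auto simp: pair_partitions_def split_merge_pairs)
  show "(\<lambda>(as, bs). merge_pairs as bs) ` pair_partitions n
      \<subseteq> {xs. is_distinct_partition xs \<and> even (length xs) \<and> odd_part_sum xs = n}"
    by (auto simp: pair_partitions_def merge_pairs_distinct_partition length_merge_pairs
        odd_part_sum_merge_pairs)
  show "\<forall>l\<in>{xs. is_distinct_partition xs \<and> even (length xs) \<and> odd_part_sum xs = n}.
      (case split_pairs l of (as, bs) \<Rightarrow> merge_pairs as bs) = l"
  proof
    fix l assume l: "l \<in> {xs. is_distinct_partition xs \<and> even (length xs) \<and> odd_part_sum xs = n}"
    obtain as bs where split: "split_pairs l = (as, bs)"
      by fastforce
    have "merge_pairs as bs = l"
      using merge_split_pairs[of l as bs] l split by blast
    then show "(case split_pairs l of (as, bs) \<Rightarrow> merge_pairs as bs) = l"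
      by (simp add: split)
  qed
  show "split_pairs ` {xs. is_distinct_partition xs \<and> even (length xs) \<and> odd_part_sum xs = n}
      \<subseteq> pair_partitions n"
  proof
    fix x
    assume "x \<in> split_pairs ` {xs. is_distinct_partition xs \<and> even (length xs) \<and> odd_part_sum xs = n}"
    then obtain l where l: "is_distinct_partition l" "even (length l)" "odd_part_sum l = n"
      and "x = split_pairs l"
      by blast
    moreover obtain as bs where "split_pairs l = (as, bs)"
      by fastforce
    ultimately have x: "x = (as, bs)" "split_pairs l = (as, bs)"
      by simp_all
    then show "x \<in> pair_partitions n"
      using merge_split_pairs[OF l(1,2) x(2)] odd_part_sum_merge_pairs[of as bs] l(3)
      by (auto simp: pair_partitions_def)
  qed
qed

fun gaps :: "nat list \<Rightarrow> nat list" where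
  "gaps [] = []"
| "gaps (b # bs) = (b - hd_succ bs) # gaps bs"

fun of_gaps :: "nat list \<Rightarrow> nat list" where
  "of_gaps [] = []"
| "of_gaps (y # ys) = (y + hd_succ (of_gaps ys)) # of_gaps ys"

lemma length_gaps [simp]: "length (gaps bs) = length bs"
  by (induction bs) auto

lemma length_of_gaps [simp]: "length (of_gaps ys) = length ys"
  by (induction ys) auto

lemma gaps_of_gaps [simp]: "gaps (of_gaps ys) = ys"
  by (induction ys) auto

lemma of_gaps_gaps: "sorted_wrt (>) bs \<Longrightarrow> of_gaps (gaps bs) = bs"
proof (induction bs)
  case (Cons b bs)
  then show ?case
    using hd_succ_le[OF Cons.prems] by simp
qed simp

lemma sorted_of_gaps: "sorted_wrt (>) (of_gaps ys)"
proof (induction ys)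
  case (Cons y ys)
  have "of_gaps ys = [] \<or> hd (of_gaps ys) < y + hd_succ (of_gaps ys)"
    by (cases "of_gaps ys") auto
  with Cons show ?case
    by (simp add: strict_desc_Cons_iff del: sorted_wrt.simps(2))
qed simp

definition weighted_sum :: "nat list \<Rightarrow> nat" where
  "weighted_sum ys = (\<Sum>i<length ys. Suc i * ys ! i)"

lemma weighted_sum_Nil [simp]: "weighted_sum [] = 0"
  by (simp add: weighted_sum_def)

lemma weighted_sum_Cons [simp]: "weighted_sum (y # ys) = y + sum_list ys + weighted_sum ys"
proof -
  have "weighted_sum (y # ys) = y + (\<Sum>i<length ys. (Suc i + 1) * ys ! i)"
    unfolding weighted_sum_def by (simp add: sum.lessThan_Suc_shift del: sum.lessThan_Suc)
  also have "\<dots> = y + sum_list ys + weighted_sum ys"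
    by (simp add: weighted_sum_def sum.distrib sum_list_sum_nth atLeast0LessThan)
  finally show ?thesis .
qed

lemma sum_list_gaps: "sorted_wrt (>) bs \<Longrightarrow> sum_list (gaps bs) + length bs = hd_succ bs"
proof (induction bs)
  case (Cons b bs)
  then show ?case
    using hd_succ_le[OF Cons.prems] by simp
qed simp

lemma weighted_sum_gaps:
  "sorted_wrt (>) bs \<Longrightarrow> weighted_sum (gaps bs) + (\<Sum>i<length bs. Suc i) = sum_list bs + length bs"
proof (induction bs)
  case (Cons b bs)
  then show ?case
    using sum_list_gaps[of bs] hd_succ_le[of b bs] by simp
qed simp

definition gap_pairs :: "nat \<Rightarrow> (nat list \<times> nat list) set" where
  "gap_pairs n = {(as, ys). is_distinct_partition as \<and> length ys = length as
     \<and> sum_list as + (\<Sum>i<length as. Suc i) + weighted_sum ys = n}"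

lemma bij_betw_gaps: "bij_betw (\<lambda>(as, bs). (as, gaps bs)) (pair_partitions n) (gap_pairs n)"
proof (rule bij_betw_byWitness[where f' = "\<lambda>(as, ys). (as, of_gaps ys)"])
  show "(\<lambda>(as, bs). (as, gaps bs)) ` pair_partitions n \<subseteq> gap_pairs n"
    using weighted_sum_gaps by (fastforce simp: pair_partitions_def gap_pairs_def)
  show "(\<lambda>(as, ys). (as, of_gaps ys)) ` gap_pairs n \<subseteq> pair_partitions n"
  proof clarify
    fix as ys assume "(as, ys) \<in> gap_pairs n"
    then show "(as, of_gaps ys) \<in> pair_partitions n"
      using weighted_sum_gaps[OF sorted_of_gaps, of ys] sorted_of_gaps[of ys]
      by (auto simp: pair_partitions_def gap_pairs_def)
  qed
qed (auto simp: pair_partitions_def gap_pairs_def of_gaps_gaps)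

primrec list_of_mults :: "(nat \<Rightarrow> nat) \<Rightarrow> nat \<Rightarrow> nat list" where
  "list_of_mults c 0 = []"
| "list_of_mults c (Suc K) = replicate (c (Suc K)) (Suc K) @ list_of_mults c K"

lemma set_list_of_mults: "set (list_of_mults c K) \<subseteq> {1..K}"
  by (induction K) auto

lemma sorted_list_of_mults: "sorted_wrt (\<ge>) (list_of_mults c K)"
proof (induction K)
  case (Suc K)
  have "sorted_wrt (\<ge>) (replicate n (Suc K))" for n
    by (induction n) auto
  then show ?case
    using Suc set_list_of_mults[of c K] by (auto simp: sorted_wrt_append)
qed simp

lemma count_list_replicate: "count_list (replicate n x) y = (if x = y then n else 0)"
  by (induction n) auto

lemma count_list_of_mults:
  "count_list (list_of_mults c K) k = (if 1 \<le> k \<and> k \<le> K then c k else 0)"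
  by (induction K) (auto simp: count_list_replicate)

lemma sum_list_of_mults: "sum_list (list_of_mults c K) = (\<Sum>k=1..K. k * c k)"
  by (induction K) (auto simp: sum_list_replicate)

lemma list_of_mults_cong:
  "(\<And>k. 1 \<le> k \<Longrightarrow> k \<le> K \<Longrightarrow> c k = d k) \<Longrightarrow> list_of_mults c K = list_of_mults d K"
  by (induction K) auto

lemma sorted_desc_mset_eq:
  assumes "sorted_wrt (\<ge>) (xs::nat list)" "sorted_wrt (\<ge>) ys" "mset xs = mset ys"
  shows "xs = ys"
proof -
  have "sorted (rev xs)" "sorted (rev ys)" "mset (rev xs) = mset (rev ys)"
    using assms by (auto simp: sorted_wrt_rev)
  then have "rev xs = rev ys"
    by (metis properties_for_sort)
  then show ?thesis by simp
qed

lemma list_of_mults_count_list: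
  assumes "sorted_wrt (\<ge>) xs" "set xs \<subseteq> {1..K}"
  shows "list_of_mults (count_list xs) K = xs"
proof (rule sorted_desc_mset_eq[OF sorted_list_of_mults assms(1)])
  have "count_list (list_of_mults (count_list xs) K) k = count_list xs k" for k
    using assms(2) by (auto simp: count_list_of_mults count_list_0_iff)
  then show "mset (list_of_mults (count_list xs) K) = mset xs"
    by (simp add: multiset_eq_iff count_mset)
qed

(* With L = length ys: ys ! 0 = m_1 + (L + 1) m_(L+1) with m_1 <= L, and ys ! (k - 1) = m_k
   for 2 <= k <= L. *)
definition tail_mults :: "nat list \<Rightarrow> nat \<Rightarrow> nat" where
  "tail_mults ys k =
     (if k = 1 then ys ! 0 mod Suc (length ys)
      else if k = Suc (length ys) then ys ! 0 div Suc (length ys)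
      else if k \<le> length ys then ys ! (k - 1) else 0)"

definition tail_of_gaps :: "nat list \<Rightarrow> nat list" where
  "tail_of_gaps ys = list_of_mults (tail_mults ys) (Suc (length ys))"

definition gaps_of_tail :: "nat \<Rightarrow> nat list \<Rightarrow> nat list" where
  "gaps_of_tail L t = map (\<lambda>k. if k = 0 then count_list t 1 + Suc L * count_list t (Suc L)
     else count_list t (Suc k)) [0..<L]"

lemma length_gaps_of_tail [simp]: "length (gaps_of_tail L t) = L"
  by (simp add: gaps_of_tail_def)

lemma nth_gaps_of_tail:
  "k < L \<Longrightarrow> gaps_of_tail L t ! k =
     (if k = 0 then count_list t 1 + Suc L * count_list t (Suc L) else count_list t (Suc k))"
  by (simp add: gaps_of_tail_def)

lemma sum_list_tail_of_gaps: "sum_list (tail_of_gaps ys) = weighted_sum ys"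
proof (cases "length ys")
  case 0
  then show ?thesis by (simp add: tail_of_gaps_def tail_mults_def weighted_sum_def)
next
  case (Suc m)
  let ?c = "tail_mults ys"
  have c_top: "?c 1 + Suc (Suc m) * ?c (Suc (Suc m)) = ys ! 0"
    using Suc by (simp add: tail_mults_def mod_mult_div_eq del: mult_Suc)
  have c_mid: "(\<Sum>i<m. Suc (Suc i) * ?c (Suc (Suc i))) = (\<Sum>i<m. Suc (Suc i) * ys ! Suc i)"
    using Suc by (intro sum.cong) (auto simp: tail_mults_def)
  have "sum_list (tail_of_gaps ys) = (\<Sum>k=1..Suc (length ys). k * ?c k)"
    by (simp only: tail_of_gaps_def sum_list_of_mults)
  also have "\<dots> = (\<Sum>i<Suc (Suc m). Suc i * ?c (Suc i))"
    by (simp only: One_nat_def sum.atLeast1_atMost_eq Suc)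
  also have "\<dots> = ?c 1 + (\<Sum>i<m. Suc (Suc i) * ?c (Suc (Suc i))) + Suc (Suc m) * ?c (Suc (Suc m))"
    by (simp only: sum.lessThan_Suc[of _ "Suc m"] sum.lessThan_Suc_shift[of _ m]) simp
  also have "\<dots> = ys ! 0 + (\<Sum>i<m. Suc (Suc i) * ys ! Suc i)"
    using c_top c_mid by simp
  also have "\<dots> = weighted_sum ys"
    by (simp only: weighted_sum_def Suc sum.lessThan_Suc_shift[of _ m])
  finally show ?thesis .
qed

lemma set_tail_of_gaps: "set (tail_of_gaps ys) \<subseteq> {1..Suc (length ys)}"
  unfolding tail_of_gaps_def by (rule set_list_of_mults)

lemma sorted_tail_of_gaps: "sorted_wrt (\<ge>) (tail_of_gaps ys)"
  unfolding tail_of_gaps_def by (rule sorted_list_of_mults)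

lemma count_list_tail_of_gaps_1: "count_list (tail_of_gaps ys) 1 \<le> length ys"
  by (simp add: tail_of_gaps_def count_list_of_mults tail_mults_def del: list_of_mults.simps)

lemma gaps_of_tail_of_gaps: "gaps_of_tail (length ys) (tail_of_gaps ys) = ys"
proof (rule nth_equalityI)
  fix k assume "k < length (gaps_of_tail (length ys) (tail_of_gaps ys))"
  then show "gaps_of_tail (length ys) (tail_of_gaps ys) ! k = ys ! k"
    by (cases "k = 0")
      (simp_all add: nth_gaps_of_tail tail_of_gaps_def count_list_of_mults tail_mults_def mod_mult_div_eq
        del: list_of_mults.simps mult_Suc)
qed simp

lemma tail_of_gaps_of_tail:
  assumes "sorted_wrt (\<ge>) t" "set t \<subseteq> {1..Suc L}" "count_list t 1 \<le> L"
  shows "tail_of_gaps (gaps_of_tail L t) = t"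
proof -
  have "tail_mults (gaps_of_tail L t) k = count_list t k" if k: "1 \<le> k" "k \<le> Suc L" for k
  proof -
    consider "k = 1" "L = 0" | "k = 1" "L \<noteq> 0" | "k = Suc L" "L \<noteq> 0" | "2 \<le> k" "k \<le> L"
      using k by force
    then show ?thesis
      using assms(3) by cases (simp_all add: tail_mults_def nth_gaps_of_tail del: mult_Suc)
  qed
  then have "tail_of_gaps (gaps_of_tail L t) = list_of_mults (count_list t) (Suc L)"
    unfolding tail_of_gaps_def length_gaps_of_tail by (rule list_of_mults_cong)
  also have "\<dots> = t"
    using list_of_mults_count_list assms(1,2) .
  finally show ?thesis .
qed

lemma sorted_desc_nth_mono:
  "sorted_wrt (\<ge>) (xs::nat list) \<Longrightarrow> i \<le> j \<Longrightarrow> j < length xs \<Longrightarrow> xs ! j \<le> xs ! i"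
  by (rule sorted_rev_nth_mono) (simp_all add: sorted_wrt_rev)

lemma strict_desc_nth_gap:
  "sorted_wrt (>) (xs::nat list) \<Longrightarrow> i \<le> j \<Longrightarrow> j < length xs \<Longrightarrow> xs ! j + (j - i) \<le> xs ! i"
proof (induction j)
  case (Suc j)
  then show ?case
    using sorted_wrt_nth_less[OF Suc.prems(1), of j "Suc j"] by (cases "i = Suc j") auto
qed simp

definition add_staircase :: "nat list \<Rightarrow> nat list" where
  "add_staircase as = map (\<lambda>i. as ! i + Suc i) [0..<length as]"

definition sub_staircase :: "nat list \<Rightarrow> nat list" where
  "sub_staircase p = map (\<lambda>i. p ! i - Suc i) [0..<length p]"

lemma length_add_staircase [simp]: "length (add_staircase as) = length as"
  by (simp add: add_staircase_def)

lemma nth_add_staircase [simp]: "i < length as \<Longrightarrow> add_staircase as ! i = as ! i + Suc i"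
  by (simp add: add_staircase_def)

lemma sum_list_add_staircase:
  "sum_list (add_staircase as) = sum_list as + (\<Sum>i<length as. Suc i)"
  by (simp add: add_staircase_def sum_list_sum_nth atLeast0LessThan flip: sum.distrib)

lemma sub_add_staircase [simp]: "sub_staircase (add_staircase as) = as"
  by (rule nth_equalityI) (simp_all add: sub_staircase_def)

lemma add_sub_staircase:
  assumes "\<And>i. i < length p \<Longrightarrow> i < p ! i"
  shows "add_staircase (sub_staircase p) = p"
proof (rule nth_equalityI)
  fix i assume "i < length (add_staircase (sub_staircase p))"
  then show "add_staircase (sub_staircase p) ! i = p ! i"
    using assms[of i] by (simp add: sub_staircase_def)
qed (simp add: sub_staircase_def)

lemma sorted_add_staircase:
  assumes "is_distinct_partition as"
  shows "sorted_wrt (\<ge>) (add_staircase as)"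
proof -
  have "as ! j + j \<le> as ! i + i" if "i < j" "j < length as" for i j
    using that strict_desc_nth_gap[of as i j] assms by (simp add: is_distinct_partition_def)
  then show ?thesis
    by (simp add: sorted_wrt_iff_nth_less)
qed

lemma add_staircase_lower_bound:
  assumes "is_distinct_partition as" "x \<in> set (add_staircase as)"
  shows "Suc (length as) \<le> x"
proof -
  obtain i where i: "i < length as" "x = as ! i + Suc i"
    using assms(2) by (auto simp: in_set_conv_nth)
  have "as ! (length as - 1) + (length as - 1 - i) \<le> as ! i" "0 < as ! (length as - 1)"
    using assms(1) i(1) strict_desc_nth_gap[of as i "length as - 1"]
    by (auto simp: is_distinct_partition_def)
  then show ?thesis
    using i by simp
qed

lemma sub_staircase_distinct_partition:
  assumes "sorted_wrt (\<ge>) p" "\<And>i. i < length p \<Longrightarrow> i + 2 \<le> p ! i"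
  shows "is_distinct_partition (sub_staircase p)"
proof -
  have "p ! j - Suc j < p ! i - Suc i" if "i < j" "j < length p" for i j
    using that assms(2)[of j] sorted_desc_nth_mono[OF assms(1), of i j] by simp
  moreover have "0 < p ! i - Suc i" if "i < length p" for i
    using that assms(2)[of i] by simp
  ultimately show ?thesis
    by (auto simp: is_distinct_partition_def sub_staircase_def sorted_wrt_iff_nth_less in_set_conv_nth)
qed

(* In 1-based indexing: the number of leading parts with p_j > j. For weakly decreasing p no
   later part has this property. *)
definition head_length :: "nat list \<Rightarrow> nat" where
  "head_length p = (LEAST L. L = length p \<or> p ! L < L + 2)"

lemma head_length_le: "head_length p \<le> length p"
  unfolding head_length_def by (rule Least_le) simp

lemma nth_less_head_length: "i < head_length p \<Longrightarrow> i + 2 \<le> p ! i"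
  using head_length_le[of p] not_less_Least[of i "\<lambda>L. L = length p \<or> p ! L < L + 2"]
  by (auto simp: head_length_def)

lemma head_length_lower_bound:
  assumes "sorted_wrt (\<ge>) p" "x \<in> set (take (head_length p) p)"
  shows "Suc (head_length p) \<le> x"
proof -
  let ?L = "head_length p"
  obtain i where i: "i < ?L" "x = p ! i"
    using assms(2) head_length_le[of p] by (auto simp: in_set_conv_nth)
  have "?L - 1 + 2 \<le> p ! (?L - 1)"
    using i(1) nth_less_head_length[of "?L - 1" p] by simp
  moreover have "p ! (?L - 1) \<le> p ! i"
    using i(1) head_length_le[of p] sorted_desc_nth_mono[OF assms(1), of i "?L - 1"] by simp
  ultimately show ?thesis
    using i by simp
qed

lemma head_length_upper_bound:
  assumes "sorted_wrt (\<ge>) p" "x \<in> set (drop (head_length p) p)"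
  shows "x \<le> Suc (head_length p)"
proof -
  let ?L = "head_length p"
  obtain j where j: "?L + j < length p" "x = p ! (?L + j)"
    using assms(2) by (fastforce simp: in_set_conv_nth less_diff_conv add.commute)
  have "?L = length p \<or> p ! ?L < ?L + 2"
    unfolding head_length_def by (rule LeastI[of _ "length p"]) simp
  then have "p ! ?L \<le> Suc ?L"
    using j(1) by simp
  moreover have "p ! (?L + j) \<le> p ! ?L"
    using j(1) sorted_desc_nth_mono[OF assms(1), of ?L "?L + j"] by simp
  ultimately show ?thesis
    using j by simp
qed

lemma head_length_append:
  assumes "\<And>i. i < length h \<Longrightarrow> i + 2 \<le> h ! i" "\<And>x. x \<in> set t \<Longrightarrow> x \<le> Suc (length h)"
  shows "head_length (h @ t) = length h"
  unfolding head_length_def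
proof (rule Least_equality)
  show "length h = length (h @ t) \<or> (h @ t) ! length h < length h + 2"
    using assms(2)[of "hd t"] by (cases t) auto
  show "length h \<le> L" if "L = length (h @ t) \<or> (h @ t) ! L < L + 2" for L
    using that assms(1)[of L] by (cases "L < length h") (auto simp: nth_append)
qed

lemma crank_nonneg_iff:
  assumes "sorted_wrt (\<ge>) p"
  shows "0 \<le> crank p \<longleftrightarrow> count_list p 1 \<le> head_length p"
proof -
  let ?L = "head_length p" and ?w = "count_list p 1"
  let ?big = "\<lambda>xs. length (filter (\<lambda>x. ?w < x) xs)"
  have big_p: "?big p = ?big (take ?L p) + ?big (drop ?L p)"
    by (metis append_take_drop_id filter_append length_append)
  have len_take: "length (take ?L p) = ?L"
    using head_length_le[of p] by simp
  show ?thesis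
  proof
    assume "0 \<le> crank p"
    show "?w \<le> ?L"
    proof (rule ccontr)
      assume "\<not> ?w \<le> ?L"
      then have "?big (drop ?L p) = 0"
        using head_length_upper_bound[OF assms] by (fastforce simp: filter_empty_conv)
      moreover have "?big (take ?L p) \<le> ?L"
        using len_take length_filter_le by metis
      ultimately have "crank p < 0"
        using big_p \<open>\<not> ?w \<le> ?L\<close> by (simp add: crank_def Let_def)
      with \<open>0 \<le> crank p\<close> show False by simp
    qed
  next
    assume "?w \<le> ?L"
    have "filter (\<lambda>x. ?w < x) (take ?L p) = take ?L p"
      using head_length_lower_bound[OF assms] \<open>?w \<le> ?L\<close> by (fastforce simp: filter_id_conv)
    then have "?w \<le> ?big p"
      using big_p len_take \<open>?w \<le> ?L\<close> by simp
    then show "0 \<le> crank p"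
      by (simp add: crank_def Let_def)
  qed
qed

definition staircase_join :: "nat list \<Rightarrow> nat list \<Rightarrow> nat list" where
  "staircase_join as ys = add_staircase as @ tail_of_gaps ys"

definition staircase_split :: "nat list \<Rightarrow> nat list \<times> nat list" where
  "staircase_split p =
     (sub_staircase (take (head_length p) p), gaps_of_tail (head_length p) (drop (head_length p) p))"

lemma sum_list_staircase_join:
  "sum_list (staircase_join as ys) = sum_list as + (\<Sum>i<length as. Suc i) + weighted_sum ys"
  by (simp add: staircase_join_def sum_list_add_staircase sum_list_tail_of_gaps)

lemma head_length_staircase_join:
  assumes "is_distinct_partition as" "length ys = length as"
  shows "head_length (staircase_join as ys) = length as"
proof -
  have "head_length (add_staircase as @ tail_of_gaps ys) = length (add_staircase as)"
    using add_staircase_lower_bound[OF assms(1)] set_tail_of_gaps[of ys] assms(2)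
    by (intro head_length_append) (fastforce simp: in_set_conv_nth)+
  then show ?thesis
    by (simp add: staircase_join_def)
qed

lemma staircase_join_partition:
  assumes "is_distinct_partition as" "length ys = length as"
  shows "is_partition (staircase_join as ys)" "0 \<le> crank (staircase_join as ys)"
proof -
  have head: "Suc (length as) \<le> x" if "x \<in> set (add_staircase as)" for x
    using add_staircase_lower_bound[OF assms(1) that] .
  have tail: "x \<in> {1..Suc (length as)}" if "x \<in> set (tail_of_gaps ys)" for x
    using that set_tail_of_gaps[of ys] assms(2) by auto
  show partition: "is_partition (staircase_join as ys)"
    unfolding staircase_join_def is_partition_def sorted_wrt_append
    using sorted_add_staircase[OF assms(1)] sorted_tail_of_gaps head tail by fastforce
  have "1 \<notin> set (add_staircase as)"
    using head[of 1] by (cases "as = []") (auto simp: add_staircase_def)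
  then have "count_list (staircase_join as ys) 1 \<le> length as"
    using count_list_tail_of_gaps_1[of ys] assms(2) by (simp add: staircase_join_def)
  then show "0 \<le> crank (staircase_join as ys)"
    using crank_nonneg_iff partition head_length_staircase_join[OF assms]
    by (simp add: is_partition_def)
qed

lemma staircase_split_join:
  assumes "is_distinct_partition as" "length ys = length as"
  shows "staircase_split (staircase_join as ys) = (as, ys)"
  using head_length_staircase_join[OF assms] gaps_of_tail_of_gaps[of ys] assms(2)
  by (simp add: staircase_split_def staircase_join_def)

lemma staircase_split_correct:
  assumes "is_partition p" "0 \<le> crank p" "staircase_split p = (as, ys)"
  shows "staircase_join as ys = p" "is_distinct_partition as" "length ys = length as"
proof -
  define L where "L = head_length p"
  have split: "as = sub_staircase (take L p)" "ys = gaps_of_tail L (drop L p)"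
    using assms(3) by (simp_all add: staircase_split_def L_def)
  have sorted: "sorted_wrt (\<ge>) p"
    using assms(1) by (simp add: is_partition_def)
  have take: "i + 2 \<le> take L p ! i" if "i < length (take L p)" for i
    using that nth_less_head_length[of i p] by (simp add: L_def)
  show "is_distinct_partition as"
    unfolding split using sorted_wrt_take[OF sorted] take by (rule sub_staircase_distinct_partition)
  show "length ys = length as"
    using head_length_le[of p] by (simp add: split sub_staircase_def L_def)
  have "add_staircase as = take L p"
    unfolding split using take by (intro add_sub_staircase) fastforce
  moreover have "count_list (take L p) 1 = 0"
    using head_length_lower_bound[OF sorted] by (fastforce simp: L_def count_list_0_iff)
  then have "count_list (drop L p) 1 \<le> L"
    using assms(2) crank_nonneg_iff[OF sorted] append_take_drop_id[of L p] count_list_append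
    by (metis L_def add_0)
  then have "tail_of_gaps ys = drop L p"
    unfolding split using sorted_wrt_drop[OF sorted] head_length_upper_bound[OF sorted] assms(1)
    by (intro tail_of_gaps_of_tail) (auto simp: L_def is_partition_def Suc_le_eq dest: in_set_dropD)
  ultimately show "staircase_join as ys = p"
    by (simp add: staircase_join_def)
qed

lemma bij_betw_staircase_join:
  "bij_betw (\<lambda>(as, ys). staircase_join as ys) (gap_pairs n)
     {xs. is_partition xs \<and> sum_list xs = n \<and> 0 \<le> crank xs}"
proof (rule bij_betw_byWitness[where f' = staircase_split])
  show "\<forall>x\<in>gap_pairs n. staircase_split (case x of (as, ys) \<Rightarrow> staircase_join as ys) = x"
    by (auto simp: gap_pairs_def staircase_split_join)
  show "(\<lambda>(as, ys). staircase_join as ys) ` gap_pairs n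
      \<subseteq> {xs. is_partition xs \<and> sum_list xs = n \<and> 0 \<le> crank xs}"
    using staircase_join_partition by (auto simp: gap_pairs_def sum_list_staircase_join)
  show "\<forall>p\<in>{xs. is_partition xs \<and> sum_list xs = n \<and> 0 \<le> crank xs}.
      (case staircase_split p of (as, ys) \<Rightarrow> staircase_join as ys) = p"
    using staircase_split_correct(1) by (auto split: prod.splits)
  show "staircase_split ` {xs. is_partition xs \<and> sum_list xs = n \<and> 0 \<le> crank xs} \<subseteq> gap_pairs n"
  proof
    fix x assume "x \<in> staircase_split ` {xs. is_partition xs \<and> sum_list xs = n \<and> 0 \<le> crank xs}"
    then obtain p where p: "is_partition p" "0 \<le> crank p" "staircase_split p = x" "sum_list p = n"
      by blast
    obtain as ys where "x = (as, ys)"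
      by fastforce
    then show "x \<in> gap_pairs n"
      using staircase_split_correct[OF p(1,2)] sum_list_staircase_join[of as ys] p
      by (simp add: gap_pairs_def)
  qed
qed

theorem theorem10:
  fixes n :: nat
  shows "card {xs. is_distinct_partition xs \<and> even (length xs) \<and> odd_part_sum xs = n}
       = card {xs. is_partition xs \<and> sum_list xs = n \<and> crank xs \<ge> 0}"
proof -
  have "card {xs. is_distinct_partition xs \<and> even (length xs) \<and> odd_part_sum xs = n}
      = card (pair_partitions n)"
    using bij_betw_same_card[OF bij_betw_merge_pairs] by simp
  also have "\<dots> = card (gap_pairs n)"
    using bij_betw_same_card[OF bij_betw_gaps] .
  also have "\<dots> = card {xs. is_partition xs \<and> sum_list xs = n \<and> crank xs \<ge> 0}"
    using bij_betw_same_card[OF bij_betw_staircase_join] .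
  finally show ?thesis .
qed
end
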